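(* $S$ is antimultiplicative, that is $S(ab)=S(b)S(a)$ for all $a,b\in A$.
   Context: Let $A$ be an associative algebra over a field $k$ (possibly without identity) with non-degenerate product, multiplier algebra $M(A)$ and left multipliers $L(A)$. Let $\Delta:A\to M(A\otimes A)$ be an algebra homomorphism (not necessarily coassociative) with Galois maps $T_{1}(a\otimes b)=\Delta(a)(1\otimes b)$ and $T_{2}(a\otimes b)=(a\otimes 1)\Delta(b)$ lying in $A\otimes A$, and $\varepsilon:A\to k$ linear with $(\varepsilon\otimes\iota)T_{1}(a\otimes b)=ab=(\iota\otimes\varepsilon)T_{2}(a\otimes b)$. Suppose $T_{1},T_{2}$ are bijective, $T_{1}^{-1}=(\iota\otimes\varepsilon\otimes\iota)(\iota\otimes T_{1}^{-1})(\Delta\otimes\iota)$ (left $A$-colinear) and $T_{2}^{-1}=(\iota\otimes\varepsilon\otimes\iota)(T_{2}^{-1}\otimes\iota)(\iota\otimes\Delta)$ (right $A$-colinear); i.e. $(A,\Delta)$ is a generalized multiplier Hopf coquasigroup. The map $S:A\to L(A)$ is defined by $S(a)b=(\varepsilon\otimes\iota)T_{1}^{-1}(a\otimes b)$. *)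

theory Defs
  imports Main "HOL.Vector_Spaces"
begin

text \<open>
  The algebra A is a type 'a of
  class ring (associative, distributive, NO identity required) together with a scalar
  multiplication scale making it a k-vector space, the product being k-bilinear.

  An element of A (x) A is represented by a finite list of pairs
  [(a1,b1),...,(an,bn)] standing for the sum of the ai (x) bi; two lists represent
  the same tensor iff they agree under every functional f (x) g with f, g linear
  functionals on A (this is exactly equality in A (x) A, vector spaces over a field).
\<close>

definition lin_fun :: "('k::field \<Rightarrow> 'a::ab_group_add \<Rightarrow> 'a) \<Rightarrow> ('a \<Rightarrow> 'k) \<Rightarrow> bool" where
  "lin_fun scale f \<longleftrightarrow> (\<forall>x y. f (x + y) = f x + f y) \<and> (\<forall>c x. f (scale c x) = c * f x)"

definition k_algebra :: "('k::field \<Rightarrow> 'a::ring \<Rightarrow> 'a) \<Rightarrow> bool" where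
  "k_algebra scale \<longleftrightarrow> vector_space scale \<and>
     (\<forall>c x y. scale c (x * y) = scale c x * y \<and> scale c (x * y) = x * scale c y)"

definition nondegenerate :: "'a::ring itself \<Rightarrow> bool" where
  "nondegenerate _ \<longleftrightarrow> (\<forall>a::'a. (\<forall>b. a * b = 0) \<longrightarrow> a = 0) \<and> (\<forall>a::'a. (\<forall>b. b * a = 0) \<longrightarrow> a = 0)"

type_synonym 'a ten = "('a \<times> 'a) list"
type_synonym 'a ten3 = "('a \<times> 'a \<times> 'a) list"

definition teq :: "('k::field \<Rightarrow> 'a::ab_group_add \<Rightarrow> 'a) \<Rightarrow> 'a ten \<Rightarrow> 'a ten \<Rightarrow> bool" where
  "teq scale t u \<longleftrightarrow> (\<forall>f g. lin_fun scale f \<longrightarrow> lin_fun scale g \<longrightarrow>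
      sum_list (map (\<lambda>(x,y). f x * g y) t) = sum_list (map (\<lambda>(x,y). f x * g y) u))"

definition teq3 :: "('k::field \<Rightarrow> 'a::ab_group_add \<Rightarrow> 'a) \<Rightarrow> 'a ten3 \<Rightarrow> 'a ten3 \<Rightarrow> bool" where
  "teq3 scale t u \<longleftrightarrow> (\<forall>f g h. lin_fun scale f \<longrightarrow> lin_fun scale g \<longrightarrow> lin_fun scale h \<longrightarrow>
      sum_list (map (\<lambda>(x,y,z). f x * g y * h z) t) = sum_list (map (\<lambda>(x,y,z). f x * g y * h z) u))"

definition tmul :: "'a::ring ten \<Rightarrow> 'a ten \<Rightarrow> 'a ten" where
  "tmul t u = concat (map (\<lambda>(a,b). map (\<lambda>(c,d). (a * c, b * d)) u) t)"

definition tscale :: "('k \<Rightarrow> 'a \<Rightarrow> 'a) \<Rightarrow> 'k \<Rightarrow> 'a ten \<Rightarrow> 'a ten" where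
  "tscale scale c t = map (\<lambda>(a,b). (scale c a, b)) t"

text \<open>Multipliers of A (x) A: pairs (l, r) of maps (left and right action).\<close>
type_synonym 'a mult = "('a ten \<Rightarrow> 'a ten) \<times> ('a ten \<Rightarrow> 'a ten)"

definition tlinear :: "('k::field \<Rightarrow> 'a::ring \<Rightarrow> 'a) \<Rightarrow> ('a ten \<Rightarrow> 'a ten) \<Rightarrow> bool" where
  "tlinear scale F \<longleftrightarrow> (\<forall>t u. teq scale t u \<longrightarrow> teq scale (F t) (F u)) \<and>
     (\<forall>t u. teq scale (F (t @ u)) (F t @ F u)) \<and>
     (\<forall>c t. teq scale (F (tscale scale c t)) (tscale scale c (F t)))"

definition is_mult :: "('k::field \<Rightarrow> 'a::ring \<Rightarrow> 'a) \<Rightarrow> 'a mult \<Rightarrow> bool" where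
  "is_mult scale m \<longleftrightarrow> tlinear scale (fst m) \<and> tlinear scale (snd m) \<and>
     (\<forall>x y. teq scale (tmul x (fst m y)) (tmul (snd m x) y))"

definition meq :: "('k::field \<Rightarrow> 'a::ring \<Rightarrow> 'a) \<Rightarrow> 'a mult \<Rightarrow> 'a mult \<Rightarrow> bool" where
  "meq scale m n \<longleftrightarrow> (\<forall>y. teq scale (fst m y) (fst n y) \<and> teq scale (snd m y) (snd n y))"

definition madd :: "'a mult \<Rightarrow> 'a mult \<Rightarrow> 'a mult" where
  "madd m n = ((\<lambda>y. fst m y @ fst n y), (\<lambda>y. snd m y @ snd n y))"

definition mscale :: "('k \<Rightarrow> 'a \<Rightarrow> 'a) \<Rightarrow> 'k \<Rightarrow> 'a mult \<Rightarrow> 'a mult" where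
  "mscale scale c m = ((\<lambda>y. tscale scale c (fst m y)), (\<lambda>y. tscale scale c (snd m y)))"

definition mmul :: "'a mult \<Rightarrow> 'a mult \<Rightarrow> 'a mult" where
  "mmul m n = (fst m \<circ> fst n, snd n \<circ> snd m)"

definition memb :: "'a::ring ten \<Rightarrow> 'a mult" where
  "memb x = ((\<lambda>y. tmul x y), (\<lambda>y. tmul y x))"

definition one_ten :: "'a::ring \<Rightarrow> 'a mult" where
  "one_ten b = ((\<lambda>y. map (\<lambda>(p,q). (p, b * q)) y), (\<lambda>y. map (\<lambda>(p,q). (p, q * b)) y))"

definition ten_one :: "'a::ring \<Rightarrow> 'a mult" where
  "ten_one a = ((\<lambda>y. map (\<lambda>(p,q). (a * p, q)) y), (\<lambda>y. map (\<lambda>(p,q). (p * a, q)) y))"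

definition alg_hom_mult :: "('k::field \<Rightarrow> 'a::ring \<Rightarrow> 'a) \<Rightarrow> ('a \<Rightarrow> 'a mult) \<Rightarrow> bool" where
  "alg_hom_mult scale \<Delta> \<longleftrightarrow> (\<forall>a. is_mult scale (\<Delta> a)) \<and>
     (\<forall>a b. meq scale (\<Delta> (a + b)) (madd (\<Delta> a) (\<Delta> b))) \<and>
     (\<forall>c a. meq scale (\<Delta> (scale c a)) (mscale scale c (\<Delta> a))) \<and>
     (\<forall>a b. meq scale (\<Delta> (a * b)) (mmul (\<Delta> a) (\<Delta> b)))"

definition lin_ext :: "('a \<Rightarrow> 'a \<Rightarrow> 'a ten) \<Rightarrow> 'a ten \<Rightarrow> 'a ten" where
  "lin_ext F t = concat (map (\<lambda>(a,b). F a b) t)"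

definition tbij :: "('k::field \<Rightarrow> 'a::ab_group_add \<Rightarrow> 'a) \<Rightarrow> ('a ten \<Rightarrow> 'a ten) \<Rightarrow> bool" where
  "tbij scale F \<longleftrightarrow> (\<forall>t u. teq scale (F t) (F u) \<longrightarrow> teq scale t u) \<and> (\<forall>u. \<exists>t. teq scale (F t) u)"

definition tinv :: "('k::field \<Rightarrow> 'a::ab_group_add \<Rightarrow> 'a) \<Rightarrow> ('a ten \<Rightarrow> 'a ten) \<Rightarrow> 'a ten \<Rightarrow> 'a ten" where
  "tinv scale F u = (SOME t. teq scale (F t) u)"

definition eps_id :: "('k \<Rightarrow> 'a::monoid_add \<Rightarrow> 'a) \<Rightarrow> ('a \<Rightarrow> 'k) \<Rightarrow> 'a ten \<Rightarrow> 'a" where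
  "eps_id scale \<epsilon> t = sum_list (map (\<lambda>(p,q). scale (\<epsilon> p) q) t)"

definition id_eps :: "('k \<Rightarrow> 'a::monoid_add \<Rightarrow> 'a) \<Rightarrow> ('a \<Rightarrow> 'k) \<Rightarrow> 'a ten \<Rightarrow> 'a" where
  "id_eps scale \<epsilon> t = sum_list (map (\<lambda>(p,q). scale (\<epsilon> q) p) t)"

definition id_eps_id :: "('k \<Rightarrow> 'a \<Rightarrow> 'a) \<Rightarrow> ('a \<Rightarrow> 'k) \<Rightarrow> 'a ten3 \<Rightarrow> 'a ten" where
  "id_eps_id scale \<epsilon> w = map (\<lambda>(x,y,z). (scale (\<epsilon> y) x, z)) w"

definition id_ten :: "('a ten \<Rightarrow> 'a ten) \<Rightarrow> 'a ten3 \<Rightarrow> 'a ten3" where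
  "id_ten F w = concat (map (\<lambda>(x,y,z). map (\<lambda>(p,q). (x,p,q)) (F [(y,z)])) w)"

definition ten_id :: "('a ten \<Rightarrow> 'a ten) \<Rightarrow> 'a ten3 \<Rightarrow> 'a ten3" where
  "ten_id F w = concat (map (\<lambda>(x,y,z). map (\<lambda>(p,q). (p,q,z)) (F [(x,y)])) w)"

text \<open>
  Galois maps: T1(a (x) b) = Delta(a)(1 (x) b) and T2(a (x) b) = (a (x) 1)Delta(b) lie in
  A (x) A; t1 a b and t2 a b are representatives of these elements.
\<close>
definition galois_maps :: "('k::field \<Rightarrow> 'a::ring \<Rightarrow> 'a) \<Rightarrow> ('a \<Rightarrow> 'a mult) \<Rightarrow>
    ('a \<Rightarrow> 'a \<Rightarrow> 'a ten) \<Rightarrow> ('a \<Rightarrow> 'a \<Rightarrow> 'a ten) \<Rightarrow> bool" where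
  "galois_maps scale \<Delta> t1 t2 \<longleftrightarrow>
     (\<forall>a b. meq scale (memb (t1 a b)) (mmul (\<Delta> a) (one_ten b))) \<and>
     (\<forall>a b. meq scale (memb (t2 a b)) (mmul (ten_one a) (\<Delta> b)))"

text \<open>
  Left A-colinearity of T1^{-1}: T1^{-1} = (iota (x) eps (x) iota)(iota (x) T1^{-1})(Delta (x) iota),
  read after covering the first leg by c (x) 1 (x) 1 : (c (x) 1 (x) 1)(Delta(a) (x) b) = T2(c (x) a) (x) b.
  Right A-colinearity of T2^{-1}: T2^{-1} = (iota (x) eps (x) iota)(T2^{-1} (x) iota)(iota (x) Delta),
  read after covering the last leg by 1 (x) 1 (x) c : (a (x) Delta(b))(1 (x) 1 (x) c) = a (x) T1(b (x) c).
\<close>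
definition left_colinear :: "('k::field \<Rightarrow> 'a::ring \<Rightarrow> 'a) \<Rightarrow> ('a \<Rightarrow> 'k) \<Rightarrow>
    ('a \<Rightarrow> 'a \<Rightarrow> 'a ten) \<Rightarrow> ('a \<Rightarrow> 'a \<Rightarrow> 'a ten) \<Rightarrow> bool" where
  "left_colinear scale \<epsilon> t1 t2 \<longleftrightarrow> (\<forall>a b c.
     teq scale (map (\<lambda>(p,q). (c * p, q)) (tinv scale (lin_ext t1) [(a,b)]))
       (id_eps_id scale \<epsilon> (id_ten (tinv scale (lin_ext t1)) (map (\<lambda>(p,q). (p,q,b)) (t2 c a)))))"

definition right_colinear :: "('k::field \<Rightarrow> 'a::ring \<Rightarrow> 'a) \<Rightarrow> ('a \<Rightarrow> 'k) \<Rightarrow>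
    ('a \<Rightarrow> 'a \<Rightarrow> 'a ten) \<Rightarrow> ('a \<Rightarrow> 'a \<Rightarrow> 'a ten) \<Rightarrow> bool" where
  "right_colinear scale \<epsilon> t1 t2 \<longleftrightarrow> (\<forall>a b c.
     teq scale (map (\<lambda>(p,q). (p, q * c)) (tinv scale (lin_ext t2) [(a,b)]))
       (id_eps_id scale \<epsilon> (ten_id (tinv scale (lin_ext t2)) (map (\<lambda>(p,q). (a,p,q)) (t1 b c)))))"

text \<open>The antipode S : A \<rightarrow> L(A), S(a)b = (eps (x) iota)T1^{-1}(a (x) b), as a map A \<rightarrow> (A \<Rightarrow> A).\<close>
definition antipode :: "('k::field \<Rightarrow> 'a::ring \<Rightarrow> 'a) \<Rightarrow> ('a \<Rightarrow> 'k) \<Rightarrow>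
    ('a \<Rightarrow> 'a \<Rightarrow> 'a ten) \<Rightarrow> 'a \<Rightarrow> 'a \<Rightarrow> 'a" where
  "antipode scale \<epsilon> t1 a b = eps_id scale \<epsilon> (tinv scale (lin_ext t1) [(a,b)])"

end

theory Submission
  imports Defs
begin

text \<open>
  Write T1^-1(a \<otimes> c) = \<Sum> p_i \<otimes> q_i, so that S(a)c = \<Sum> \<epsilon>(p_i) q_i.
  Since \<Delta>(p)(b \<otimes> q) = T1(p \<otimes> q)(b \<otimes> 1), applying T1 to \<Sum> (p_i \<otimes> 1) T1^-1(b \<otimes> q_i)
  gives T1(T1^-1(a \<otimes> c))(b \<otimes> 1) = ab \<otimes> c, hence
  T1^-1(ab \<otimes> c) = \<Sum> (p_i \<otimes> 1) T1^-1(b \<otimes> q_i).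
  Left colinearity expresses (p \<otimes> 1) T1^-1(b \<otimes> q) through T2(p \<otimes> b), and
  (\<epsilon> \<otimes> \<iota>) T2(p \<otimes> b) = \<epsilon>(p) b, so applying \<epsilon> \<otimes> \<iota> to the i-th summand gives
  \<epsilon>(p_i) S(b) q_i; summing over i yields S(ab)c = S(b)(S(a)c).
  The identity for T2 needs \<epsilon> to be multiplicative, which follows from the counit property
  and the surjectivity of T1. Equalities in A \<otimes> A are checked against functionals f \<otimes> g,
  or, by nondegeneracy, after multiplying with arbitrary tensors.
\<close>

section \<open>Tensor representatives and slice maps\<close>

lemma vector_space_field: "vector_space ((*) :: 'k::field \<Rightarrow> 'k \<Rightarrow> 'k)"
  by unfold_locales (auto simp: algebra_simps)

lemma lin_fun_iff_linear:
  "vector_space scale \<Longrightarrow> lin_fun scale f \<longleftrightarrow> Vector_Spaces.linear scale (*) f"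
  unfolding lin_fun_def linear_iff using vector_space_field by auto

lemma lin_fun_separates_points:
  fixes scale :: "'k::field \<Rightarrow> 'a::ab_group_add \<Rightarrow> 'a"
  assumes vs: "vector_space scale" and eq: "\<And>g. lin_fun scale g \<Longrightarrow> g x = g y"
  shows "x = y"
proof (rule ccontr)
  assume "x \<noteq> y"
  interpret vector_space_pair scale "(*) :: 'k \<Rightarrow> 'k \<Rightarrow> 'k"
    using vs vector_space_field by (simp add: vector_space_pair_def)
  have "vs1.independent {x - y}" using \<open>x \<noteq> y\<close> by simp
  from linear_independent_extend[OF this, of "\<lambda>_. 1"]
  obtain g where g: "Vector_Spaces.linear scale (*) g" "g (x - y) = 1" by auto
  then have "g x = g y" using eq vs by (simp add: lin_fun_iff_linear)
  with g show False by (simp add: linear_diff)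
qed

lemma lin_fun_add: "lin_fun scale f \<Longrightarrow> f (x + y) = f x + f y"
  by (simp add: lin_fun_def)

lemma lin_fun_scale: "lin_fun scale f \<Longrightarrow> f (scale c x) = c * f x"
  by (simp add: lin_fun_def)

lemma lin_fun_zero: "lin_fun scale f \<Longrightarrow> f 0 = 0"
  by (metis add_cancel_right_right add_0 lin_fun_add)

definition tpair :: "('a \<Rightarrow> 'k::comm_ring) \<Rightarrow> ('a \<Rightarrow> 'k) \<Rightarrow> 'a ten \<Rightarrow> 'k" where
  "tpair f g t = sum_list (map (\<lambda>(x, y). f x * g y) t)"

lemma tpair_Nil [simp]: "tpair f g [] = 0"
  and tpair_Cons [simp]: "tpair f g ((x, y) # t) = f x * g y + tpair f g t"
  and tpair_append [simp]: "tpair f g (t @ u) = tpair f g t + tpair f g u"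
  by (simp_all add: tpair_def)

lemma tpair_map:
  "tpair f g (map (\<lambda>(p, q). (\<phi> p, \<psi> q)) t) = tpair (\<lambda>x. f (\<phi> x)) (\<lambda>y. g (\<psi> y)) t"
  by (induct t) auto

lemma teq_iff_tpair:
  "teq scale t u \<longleftrightarrow> (\<forall>f g. lin_fun scale f \<longrightarrow> lin_fun scale g \<longrightarrow> tpair f g t = tpair f g u)"
  unfolding teq_def tpair_def ..

lemma teq_refl [simp]: "teq scale t t"
  and teq_sym: "teq scale t u \<Longrightarrow> teq scale u t"
  and teq_trans [trans]: "teq scale t u \<Longrightarrow> teq scale u v \<Longrightarrow> teq scale t v"
  by (simp_all add: teq_iff_tpair)

lemma teq_append: "teq scale t t' \<Longrightarrow> teq scale u u' \<Longrightarrow> teq scale (t @ u) (t' @ u')"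
  by (simp add: teq_iff_tpair)

lemma teq_concat_map:
  "(\<And>x. x \<in> set xs \<Longrightarrow> teq scale (F x) (G x)) \<Longrightarrow>
    teq scale (concat (map F xs)) (concat (map G xs))"
  by (induct xs) (auto simp: teq_iff_tpair)

lemma lin_fun_id_eps: "lin_fun scale f \<Longrightarrow> f (id_eps scale g t) = tpair f g t"
  by (induct t) (auto simp: id_eps_def lin_fun_zero lin_fun_add lin_fun_scale mult.commute)

lemma lin_fun_eps_id: "lin_fun scale g \<Longrightarrow> g (eps_id scale f t) = tpair f g t"
  by (induct t) (auto simp: eps_id_def lin_fun_zero lin_fun_add lin_fun_scale)

lemma eps_id_Nil [simp]: "eps_id scale f [] = 0"
  and eps_id_append [simp]: "eps_id scale f (t @ u) = eps_id scale f t + eps_id scale f u"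
  by (simp_all add: eps_id_def)

lemma eps_id_concat: "eps_id scale f (concat ts) = sum_list (map (eps_id scale f) ts)"
  by (induct ts) auto

lemma tlinear_Nil:
  assumes "tlinear scale F"
  shows "teq scale (F []) []"
  unfolding teq_iff_tpair
proof (intro allI impI)
  fix f g assume "lin_fun scale f" "lin_fun scale g"
  moreover have "teq scale (F ([] @ [])) (F [] @ F [])"
    using assms unfolding tlinear_def by blast
  ultimately have "tpair f g (F []) = tpair f g (F []) + tpair f g (F [])"
    unfolding teq_iff_tpair by (metis append_Nil tpair_append)
  then show "tpair f g (F []) = tpair f g []"
    by (simp only: add_cancel_right_right tpair_Nil)
qed

lemma lin_ext_Nil [simp]: "lin_ext f [] = []"
  and lin_ext_Cons [simp]: "lin_ext f ((a, b) # t) = f a b @ lin_ext f t"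
  and lin_ext_append [simp]: "lin_ext f (t @ u) = lin_ext f t @ lin_ext f u"
  by (simp_all add: lin_ext_def)

lemma lin_ext_concat: "lin_ext f (concat ts) = concat (map (lin_ext f) ts)"
  by (induct ts) auto

lemma tbij_injective: "tbij scale F \<Longrightarrow> teq scale (F t) (F t') \<Longrightarrow> teq scale t t'"
  by (simp add: tbij_def)

lemma tbij_tinv: "tbij scale F \<Longrightarrow> teq scale (F (tinv scale F u)) u"
  unfolding tinv_def tbij_def by (metis someI_ex)

lemma tinv_teq:
  assumes "tbij scale F" and "teq scale u u'"
  shows "teq scale (tinv scale F u) (tinv scale F u')"
proof (rule tbij_injective[OF assms(1)])
  have "teq scale (F (tinv scale F u)) u" by (rule tbij_tinv[OF assms(1)])
  also have "teq scale u u'" by fact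
  also have "teq scale u' (F (tinv scale F u'))" by (rule teq_sym, rule tbij_tinv[OF assms(1)])
  finally show "teq scale (F (tinv scale F u)) (F (tinv scale F u'))" .
qed

lemma tinv_lin_ext_append:
  assumes bij: "tbij scale (lin_ext f)"
  shows "teq scale (tinv scale (lin_ext f) (u @ v))
    (tinv scale (lin_ext f) u @ tinv scale (lin_ext f) v)"
proof (rule tbij_injective[OF bij])
  have "teq scale (lin_ext f (tinv scale (lin_ext f) (u @ v))) (u @ v)"
    by (rule tbij_tinv[OF bij])
  also have "teq scale (u @ v)
      (lin_ext f (tinv scale (lin_ext f) u) @ lin_ext f (tinv scale (lin_ext f) v))"
    by (rule teq_append; rule teq_sym, rule tbij_tinv[OF bij])
  finally show "teq scale (lin_ext f (tinv scale (lin_ext f) (u @ v)))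
      (lin_ext f (tinv scale (lin_ext f) u @ tinv scale (lin_ext f) v))"
    by simp
qed

lemma lin_ext_surj_eq:
  fixes scale :: "'k::field \<Rightarrow> 'a::ab_group_add \<Rightarrow> 'a"
    and G H :: "'a ten \<Rightarrow> 'b::ab_group_add"
  assumes bij: "tbij scale (lin_ext f)"
    and G_teq: "\<And>u u'. teq scale u u' \<Longrightarrow> G u = G u'"
    and H_teq: "\<And>u u'. teq scale u u' \<Longrightarrow> H u = H u'"
    and G_append: "\<And>u v. G (u @ v) = G u + G v"
    and H_append: "\<And>u v. H (u @ v) = H u + H v"
    and generators: "\<And>a b. G (f a b) = H (f a b)"
  shows "G w = H w"
proof -
  obtain t where t: "teq scale (lin_ext f t) w"
    using bij unfolding tbij_def by blast
  have "G [] = 0" "H [] = 0"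
    using G_append[of "[]" "[]"] H_append[of "[]" "[]"] by simp_all
  then have "G (lin_ext f t) = H (lin_ext f t)"
    by (induct t) (auto simp: G_append H_append generators)
  then show ?thesis
    using G_teq[OF t] H_teq[OF t] by simp
qed

locale field_algebra =
  fixes scale :: "'k::field \<Rightarrow> 'a::ring \<Rightarrow> 'a"
  assumes k_algebra: "k_algebra scale"
begin

sublocale vector_space scale
  using k_algebra by (simp add: k_algebra_def)

abbreviation teq_infix :: "'a ten \<Rightarrow> 'a ten \<Rightarrow> bool" (infix "\<approx>" 50)
  where "t \<approx> u \<equiv> teq scale t u"

lemma scale_mult_left: "scale c (x * y) = scale c x * y"
  and scale_mult_right: "scale c (x * y) = x * scale c y"
  using k_algebra unfolding k_algebra_def by blast+

lemma linear_mult_right: "Vector_Spaces.linear scale scale (\<lambda>x. x * c)"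
  and linear_mult_left: "Vector_Spaces.linear scale scale (\<lambda>x. c * x)"
  by (simp_all add: linear_iff vector_space_axioms distrib_left distrib_right
      flip: scale_mult_left scale_mult_right)

lemma lin_fun_comp_linear:
  "lin_fun scale g \<Longrightarrow> Vector_Spaces.linear scale scale \<phi> \<Longrightarrow> lin_fun scale (\<lambda>x. g (\<phi> x))"
  by (simp add: lin_fun_def linear_iff)

lemma teq_map:
  assumes "Vector_Spaces.linear scale scale \<phi>" and "Vector_Spaces.linear scale scale \<psi>" and "t \<approx> u"
  shows "map (\<lambda>(p, q). (\<phi> p, \<psi> q)) t \<approx> map (\<lambda>(p, q). (\<phi> p, \<psi> q)) u"
  using assms lin_fun_comp_linear unfolding teq_iff_tpair tpair_map by blast

lemma teq_map_fst:
  "Vector_Spaces.linear scale scale \<phi> \<Longrightarrow> t \<approx> u \<Longrightarrow>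
    map (\<lambda>(p, q). (\<phi> p, q)) t \<approx> map (\<lambda>(p, q). (\<phi> p, q)) u"
  using teq_map[OF _ linear_ident] by simp

lemma teq_tscale: "t \<approx> u \<Longrightarrow> tscale scale c t \<approx> tscale scale c u"
  unfolding tscale_def by (rule teq_map_fst[OF linear_scale_self])

lemma teq_iff_id_eps: "t \<approx> u \<longleftrightarrow> (\<forall>g. lin_fun scale g \<longrightarrow> id_eps scale g t = id_eps scale g u)"
  unfolding teq_iff_tpair
  by (auto intro: lin_fun_separates_points[OF vector_space_axioms] simp flip: lin_fun_id_eps)

lemma teq_iff_eps_id: "t \<approx> u \<longleftrightarrow> (\<forall>f. lin_fun scale f \<longrightarrow> eps_id scale f t = eps_id scale f u)"
  unfolding teq_iff_tpair
  by (auto intro: lin_fun_separates_points[OF vector_space_axioms] simp flip: lin_fun_eps_id)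

lemma id_eps_map_fst:
  assumes "Vector_Spaces.linear scale scale \<phi>"
  shows "id_eps scale g (map (\<lambda>(p, q). (\<phi> p, q)) t) = \<phi> (id_eps scale g t)"
proof -
  interpret linear scale scale \<phi> by fact
  show ?thesis by (induct t) (auto simp: id_eps_def add scale)
qed

lemma eps_id_map_snd:
  assumes "Vector_Spaces.linear scale scale \<psi>"
  shows "eps_id scale f (map (\<lambda>(p, q). (p, \<psi> q)) t) = \<psi> (eps_id scale f t)"
proof -
  interpret linear scale scale \<psi> by fact
  show ?thesis by (induct t) (auto simp: eps_id_def add scale)
qed

lemma teq_cancel_fst:
  assumes lin: "\<And>i. Vector_Spaces.linear scale scale (\<phi> i)"
    and inj: "\<And>x y. (\<And>i. \<phi> i x = \<phi> i y) \<Longrightarrow> x = y"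
    and eq: "\<And>i. map (\<lambda>(p, q). (\<phi> i p, q)) t \<approx> map (\<lambda>(p, q). (\<phi> i p, q)) t'"
  shows "t \<approx> t'"
  unfolding teq_iff_id_eps
proof (intro allI impI)
  fix g assume "lin_fun scale g"
  show "id_eps scale g t = id_eps scale g t'"
  proof (rule inj)
    fix i
    show "\<phi> i (id_eps scale g t) = \<phi> i (id_eps scale g t')"
      using eq[of i] \<open>lin_fun scale g\<close> by (simp add: teq_iff_id_eps id_eps_map_fst[OF lin])
  qed
qed

lemma teq_cancel_snd:
  assumes lin: "\<And>i. Vector_Spaces.linear scale scale (\<psi> i)"
    and inj: "\<And>x y. (\<And>i. \<psi> i x = \<psi> i y) \<Longrightarrow> x = y"
    and eq: "\<And>i. map (\<lambda>(p, q). (p, \<psi> i q)) t \<approx> map (\<lambda>(p, q). (p, \<psi> i q)) t'"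
  shows "t \<approx> t'"
  unfolding teq_iff_eps_id
proof (intro allI impI)
  fix f assume "lin_fun scale f"
  show "eps_id scale f t = eps_id scale f t'"
  proof (rule inj)
    fix i
    show "\<psi> i (eps_id scale f t) = \<psi> i (eps_id scale f t')"
      using eq[of i] \<open>lin_fun scale f\<close> by (simp add: teq_iff_eps_id eps_id_map_snd[OF lin])
  qed
qed

lemma eps_id_teq: "lin_fun scale f \<Longrightarrow> t \<approx> u \<Longrightarrow> eps_id scale f t = eps_id scale f u"
  by (simp add: teq_iff_eps_id)

lemma eps_id_tscale:
  "lin_fun scale f \<Longrightarrow> eps_id scale f (tscale scale c t) = scale c (eps_id scale f t)"
  by (induct t) (auto simp: eps_id_def tscale_def lin_fun_scale scale_right_distrib)

lemma single_eps_id_fst: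
  assumes "lin_fun scale f"
  shows "[(eps_id scale f t, b)] \<approx> map (\<lambda>(p, q). (scale (f p) q, b)) t"
  unfolding teq_iff_tpair
proof (intro allI impI)
  fix g h :: "'a \<Rightarrow> 'k" assume "lin_fun scale g"
  then show "tpair g h [(eps_id scale f t, b)] = tpair g h (map (\<lambda>(p, q). (scale (f p) q, b)) t)"
    by (induct t) (auto simp: eps_id_def lin_fun_zero lin_fun_add lin_fun_scale distrib_right)
qed

lemma single_eps_id_snd:
  assumes "lin_fun scale f"
  shows "[(b, eps_id scale f t)] \<approx> map (\<lambda>(p, q). (scale (f p) b, q)) t"
  unfolding teq_iff_tpair
proof (intro allI impI)
  fix g h :: "'a \<Rightarrow> 'k" assume "lin_fun scale g" "lin_fun scale h"
  then show "tpair g h [(b, eps_id scale f t)] = tpair g h (map (\<lambda>(p, q). (scale (f p) b, q)) t)"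
    by (induct t) (auto simp: eps_id_def lin_fun_zero lin_fun_add lin_fun_scale algebra_simps)
qed

lemma tmul_Nil [simp]: "tmul [] v = []"
  and tmul_Cons: "tmul ((a, b) # t) v = map (\<lambda>(c, d). (a * c, b * d)) v @ tmul t v"
  and tmul_append: "tmul (t @ u) v = tmul t v @ tmul u v"
  by (simp_all add: tmul_def)

lemma tmul_assoc: "tmul (tmul t u) v = tmul t (tmul u v)"
proof -
  have "tmul (map (\<lambda>(c, d). (a * c, b * d)) u) v = map (\<lambda>(c, d). (a * c, b * d)) (tmul u v)"
    for a b
    by (induct u) (auto simp: tmul_Cons mult.assoc)
  then show ?thesis
    by (induct t) (auto simp: tmul_Cons tmul_append)
qed

lemma tmul_single_left: "tmul [(a, b)] v = map (\<lambda>(c, d). (a * c, b * d)) v"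
  by (simp add: tmul_Cons)

lemma tmul_single_right: "tmul t [(c, d)] = map (\<lambda>(a, b). (a * c, b * d)) t"
  by (induct t) (auto simp: tmul_Cons)

lemma tmul_map_fst_right:
  "tmul (map (\<lambda>(p, q). (p * x, q)) t) v = tmul t (map (\<lambda>(c, d). (x * c, d)) v)"
  by (induct t) (auto simp: tmul_Cons mult.assoc)

lemma tmul_map_snd_right:
  "tmul (map (\<lambda>(p, q). (p, q * y)) t) v = tmul t (map (\<lambda>(c, d). (c, y * d)) v)"
  by (induct t) (auto simp: tmul_Cons mult.assoc)

lemma tmul_map_fst_left:
  "tmul (map (\<lambda>(p, q). (x * p, q)) t) v = map (\<lambda>(p, q). (x * p, q)) (tmul t v)"
  by (induct t) (auto simp: tmul_Cons mult.assoc)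

lemma tmul_tscale: "tmul (tscale scale c t) v = tscale scale c (tmul t v)"
  by (induct t) (auto simp: tscale_def tmul_Cons scale_mult_left)

lemma tpair_tmul:
  "tpair f g (tmul t v) = sum_list (map (\<lambda>(c, d). tpair (\<lambda>x. f (x * c)) (\<lambda>y. g (y * d)) t) v)"
proof (induct t)
  case (Cons p t)
  obtain a b where p: "p = (a, b)" by force
  have "tpair f g (map (\<lambda>(c, d). (a * c, b * d)) v) =
      sum_list (map (\<lambda>(c, d). f (a * c) * g (b * d)) v)"
    by (induct v) auto
  then show ?case
    using Cons by (simp add: p tmul_Cons sum_list_addf[symmetric] case_prod_beta)
qed (induct v; simp)

lemma teq_tmul_left: "t \<approx> t' \<Longrightarrow> tmul t v \<approx> tmul t' v"
  unfolding teq_iff_tpair tpair_tmul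
  by (auto intro!: arg_cong[where f=sum_list] map_cong lin_fun_comp_linear linear_mult_right)

lemma tinv_lin_ext_tscale:
  assumes bij: "tbij scale (lin_ext f)"
    and f_scale: "\<And>a b. f (scale c a) b \<approx> tscale scale c (f a b)"
  shows "tinv scale (lin_ext f) (tscale scale c u) \<approx> tscale scale c (tinv scale (lin_ext f) u)"
proof (rule tbij_injective[OF bij])
  have lin_ext_tscale: "lin_ext f (tscale scale c t) \<approx> tscale scale c (lin_ext f t)" for t
    by (induct t) (auto simp: tscale_def intro!: teq_append f_scale[unfolded tscale_def])
  have "lin_ext f (tinv scale (lin_ext f) (tscale scale c u)) \<approx> tscale scale c u"
    by (rule tbij_tinv[OF bij])
  also have "\<dots> \<approx> tscale scale c (lin_ext f (tinv scale (lin_ext f) u))"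
    by (rule teq_tscale, rule teq_sym, rule tbij_tinv[OF bij])
  also have "\<dots> \<approx> lin_ext f (tscale scale c (tinv scale (lin_ext f) u))"
    by (rule teq_sym, rule lin_ext_tscale)
  finally show "lin_ext f (tinv scale (lin_ext f) (tscale scale c u))
      \<approx> lin_ext f (tscale scale c (tinv scale (lin_ext f) u))" .
qed

end

section \<open>Nondegenerate algebras\<close>

locale nondegenerate_algebra = field_algebra scale
  for scale :: "'k::field \<Rightarrow> 'a::ring \<Rightarrow> 'a" +
  assumes nondegenerate: "nondegenerate TYPE('a)"
begin

lemma mult_right_cancel:
  fixes x y :: 'a
  assumes "\<And>c. x * c = y * c"
  shows "x = y"
proof -
  have "\<forall>c. (x - y) * c = 0"
    using assms by (simp add: left_diff_distrib)
  then have "x - y = 0"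
    using nondegenerate unfolding nondegenerate_def by blast
  then show ?thesis
    by simp
qed

lemma mult_left_cancel:
  fixes x y :: 'a
  assumes "\<And>c. c * x = c * y"
  shows "x = y"
proof -
  have "\<forall>c. c * (x - y) = 0"
    using assms by (simp add: right_diff_distrib)
  then have "x - y = 0"
    using nondegenerate unfolding nondegenerate_def by blast
  then show ?thesis
    by simp
qed

lemma teq_by_tmul_right:
  assumes "\<And>v. tmul t v \<approx> tmul t' v"
  shows "t \<approx> t'"
proof (rule teq_cancel_snd[where \<psi>="\<lambda>d q. q * d"])
  show "Vector_Spaces.linear scale scale (\<lambda>q. q * d)" for d
    by (rule linear_mult_right)
  show "x = y" if "\<And>d. x * d = y * d" for x y :: 'a
    using that by (rule mult_right_cancel)
  fix d
  show "map (\<lambda>(p, q). (p, q * d)) t \<approx> map (\<lambda>(p, q). (p, q * d)) t'"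
  proof (rule teq_cancel_fst[where \<phi>="\<lambda>c p. p * c"])
    show "Vector_Spaces.linear scale scale (\<lambda>p. p * c)" for c
      by (rule linear_mult_right)
    show "x = y" if "\<And>c. x * c = y * c" for x y :: 'a
      using that by (rule mult_right_cancel)
    fix c
    show "map (\<lambda>(p, q). (p * c, q)) (map (\<lambda>(p, q). (p, q * d)) t)
        \<approx> map (\<lambda>(p, q). (p * c, q)) (map (\<lambda>(p, q). (p, q * d)) t')"
      using assms[of "[(c, d)]"] by (simp add: tmul_single_right comp_def split_def)
  qed
qed

lemma teq_by_tmul_left:
  assumes "\<And>v. tmul v t \<approx> tmul v t'"
  shows "t \<approx> t'"
proof (rule teq_cancel_snd[where \<psi>="\<lambda>d q. d * q"])
  show "Vector_Spaces.linear scale scale (\<lambda>q. d * q)" for d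
    by (rule linear_mult_left)
  show "x = y" if "\<And>d. d * x = d * y" for x y :: 'a
    using that by (rule mult_left_cancel)
  fix d
  show "map (\<lambda>(p, q). (p, d * q)) t \<approx> map (\<lambda>(p, q). (p, d * q)) t'"
  proof (rule teq_cancel_fst[where \<phi>="\<lambda>c p. c * p"])
    show "Vector_Spaces.linear scale scale (\<lambda>p. c * p)" for c
      by (rule linear_mult_left)
    show "x = y" if "\<And>c. c * x = c * y" for x y :: 'a
      using that by (rule mult_left_cancel)
    fix c
    show "map (\<lambda>(p, q). (c * p, q)) (map (\<lambda>(p, q). (p, d * q)) t)
        \<approx> map (\<lambda>(p, q). (c * p, q)) (map (\<lambda>(p, q). (p, d * q)) t')"
      using assms[of "[(c, d)]"] by (simp add: tmul_single_left comp_def split_def)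
  qed
qed

lemma is_mult_tmul:
  assumes m: "is_mult scale m"
  shows "fst m (tmul u v) \<approx> tmul (fst m u) v"
proof (rule teq_by_tmul_left)
  fix x
  have mult: "tmul x (fst m y) \<approx> tmul (snd m x) y" for x y
    using m by (simp add: is_mult_def)
  have "tmul x (fst m (tmul u v)) \<approx> tmul (tmul (snd m x) u) v"
    using mult by (simp add: tmul_assoc)
  also have "\<dots> \<approx> tmul (tmul x (fst m u)) v"
    by (rule teq_tmul_left, rule teq_sym, rule mult)
  finally show "tmul x (fst m (tmul u v)) \<approx> tmul x (tmul (fst m u) v)"
    by (simp add: tmul_assoc)
qed

end

section \<open>Antimultiplicativity of the antipode\<close>

locale left_hopf_coquasigroup = nondegenerate_algebra scale
  for scale :: "'k::field \<Rightarrow> 'a::ring \<Rightarrow> 'a" +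
  fixes \<Delta> :: "'a \<Rightarrow> 'a mult"
    and \<epsilon> :: "'a \<Rightarrow> 'k"
    and t1 t2 :: "'a \<Rightarrow> 'a \<Rightarrow> 'a ten"
  assumes hom: "alg_hom_mult scale \<Delta>"
    and galois: "galois_maps scale \<Delta> t1 t2"
    and eps_lin: "lin_fun scale \<epsilon>"
    and counit1: "\<forall>a b. eps_id scale \<epsilon> (t1 a b) = a * b"
    and bij1: "tbij scale (lin_ext t1)"
    and lcol: "left_colinear scale \<epsilon> t1 t2"
begin

abbreviation "T1 \<equiv> lin_ext t1"
abbreviation "T1inv \<equiv> tinv scale T1"
abbreviation "E \<equiv> eps_id scale \<epsilon>"
abbreviation "S \<equiv> antipode scale \<epsilon> t1"

lemma Delta_is_mult: "is_mult scale (\<Delta> a)"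
  using hom by (simp add: alg_hom_mult_def)

lemma Delta_teq: "u \<approx> u' \<Longrightarrow> fst (\<Delta> a) u \<approx> fst (\<Delta> a) u'"
  and Delta_append: "fst (\<Delta> a) (u @ v) \<approx> fst (\<Delta> a) u @ fst (\<Delta> a) v"
  and Delta_Nil: "fst (\<Delta> a) [] \<approx> []"
  using Delta_is_mult[of a] tlinear_Nil by (auto simp: is_mult_def tlinear_def)

lemma Delta_mult: "fst (\<Delta> (a * b)) v \<approx> fst (\<Delta> a) (fst (\<Delta> b) v)"
  using hom by (simp add: alg_hom_mult_def meq_def mmul_def)

lemma Delta_scale: "fst (\<Delta> (scale c a)) v \<approx> tscale scale c (fst (\<Delta> a) v)"
  using hom by (simp add: alg_hom_mult_def meq_def mscale_def)

lemma Delta_tmul: "fst (\<Delta> a) (tmul u v) \<approx> tmul (fst (\<Delta> a) u) v"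
  by (rule is_mult_tmul[OF Delta_is_mult])

lemma t1_tmul: "tmul (t1 a b) v \<approx> fst (\<Delta> a) (map (\<lambda>(p, q). (p, b * q)) v)"
  using galois by (simp add: galois_maps_def meq_def memb_def mmul_def one_ten_def)

lemma t2_tmul: "tmul (t2 a b) v \<approx> map (\<lambda>(p, q). (a * p, q)) (fst (\<Delta> b) v)"
  using galois by (simp add: galois_maps_def meq_def memb_def mmul_def ten_one_def)

lemma Delta_t1: "fst (\<Delta> a) (t1 b y) \<approx> t1 (a * b) y"
proof (rule teq_by_tmul_right)
  fix v
  have "tmul (fst (\<Delta> a) (t1 b y)) v \<approx> fst (\<Delta> a) (tmul (t1 b y) v)"
    by (rule teq_sym, rule Delta_tmul)
  also have "\<dots> \<approx> fst (\<Delta> a) (fst (\<Delta> b) (map (\<lambda>(p, q). (p, y * q)) v))"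
    by (rule Delta_teq, rule t1_tmul)
  also have "\<dots> \<approx> tmul (t1 (a * b) y) v"
    by (rule teq_sym, rule teq_trans[OF t1_tmul Delta_mult])
  finally show "tmul (fst (\<Delta> a) (t1 b y)) v \<approx> tmul (t1 (a * b) y) v" .
qed

lemma Delta_single: "fst (\<Delta> a) [(x, y)] \<approx> map (\<lambda>(p, q). (p * x, q)) (t1 a y)"
proof (rule teq_by_tmul_right)
  fix v
  have "tmul (fst (\<Delta> a) [(x, y)]) v \<approx> fst (\<Delta> a) (tmul [(x, y)] v)"
    by (rule teq_sym, rule Delta_tmul)
  also have "tmul [(x, y)] v = map (\<lambda>(p, q). (p, y * q)) (map (\<lambda>(c, d). (x * c, d)) v)"
    by (simp add: tmul_single_left comp_def case_prod_beta)
  also have "fst (\<Delta> a) \<dots> \<approx> tmul (t1 a y) (map (\<lambda>(c, d). (x * c, d)) v)"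
    by (rule teq_sym, rule t1_tmul)
  finally show "tmul (fst (\<Delta> a) [(x, y)]) v \<approx> tmul (map (\<lambda>(p, q). (p * x, q)) (t1 a y)) v"
    by (simp add: tmul_map_fst_right)
qed

lemma t1_scale: "t1 (scale c a) b \<approx> tscale scale c (t1 a b)"
proof (rule teq_by_tmul_right)
  fix v
  have "tmul (t1 (scale c a) b) v \<approx> tscale scale c (fst (\<Delta> a) (map (\<lambda>(p, q). (p, b * q)) v))"
    by (rule teq_trans[OF t1_tmul Delta_scale])
  also have "\<dots> \<approx> tscale scale c (tmul (t1 a b) v)"
    by (rule teq_tscale, rule teq_sym, rule t1_tmul)
  finally show "tmul (t1 (scale c a) b) v \<approx> tmul (tscale scale c (t1 a b)) v"
    by (simp add: tmul_tscale)
qed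

lemma t2_mult_snd: "map (\<lambda>(p, q). (p, q * y)) (t2 x b) \<approx> map (\<lambda>(p, q). (x * p, q)) (t1 b y)"
proof (rule teq_by_tmul_right)
  fix v
  have "tmul (map (\<lambda>(p, q). (p, q * y)) (t2 x b)) v = tmul (t2 x b) (map (\<lambda>(c, d). (c, y * d)) v)"
    by (rule tmul_map_snd_right)
  also have "\<dots> \<approx> map (\<lambda>(p, q). (x * p, q)) (fst (\<Delta> b) (map (\<lambda>(c, d). (c, y * d)) v))"
    by (rule t2_tmul)
  also have "\<dots> \<approx> map (\<lambda>(p, q). (x * p, q)) (tmul (t1 b y) v)"
    by (rule teq_map_fst[OF linear_mult_left], rule teq_sym, rule t1_tmul)
  finally show "tmul (map (\<lambda>(p, q). (p, q * y)) (t2 x b)) v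
      \<approx> tmul (map (\<lambda>(p, q). (x * p, q)) (t1 b y)) v"
    by (simp add: tmul_map_fst_left)
qed

lemma T1_T1inv: "T1 (T1inv u) \<approx> u"
  by (rule tbij_tinv[OF bij1])

lemma T1inv_eqI: "T1 t \<approx> u \<Longrightarrow> T1inv u \<approx> t"
  by (rule tbij_injective[OF bij1], rule teq_trans[OF T1_T1inv], rule teq_sym)

lemma T1inv_teq: "u \<approx> u' \<Longrightarrow> T1inv u \<approx> T1inv u'"
  by (rule tinv_teq[OF bij1])

lemma T1inv_append: "T1inv (u @ v) \<approx> T1inv u @ T1inv v"
  by (rule tinv_lin_ext_append[OF bij1])

lemma T1inv_tscale: "T1inv (tscale scale c u) \<approx> tscale scale c (T1inv u)"
  by (rule tinv_lin_ext_tscale[OF bij1 t1_scale])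

lemma E_teq: "u \<approx> u' \<Longrightarrow> E u = E u'"
  by (rule eps_id_teq[OF eps_lin])

lemma E_Delta: "E (fst (\<Delta> a) w) = a * E w"
proof (rule lin_ext_surj_eq[OF bij1])
  show "E (fst (\<Delta> a) u) = E (fst (\<Delta> a) u')" if "u \<approx> u'" for u u'
    using that by (intro E_teq Delta_teq)
  show "E (fst (\<Delta> a) (u @ v)) = E (fst (\<Delta> a) u) + E (fst (\<Delta> a) v)" for u v
    using E_teq[OF Delta_append] by (simp add: eps_id_def)
  show "E (fst (\<Delta> a) (t1 b y)) = a * E (t1 b y)" for b y
    using E_teq[OF Delta_t1] counit1 by (simp add: mult.assoc)
  show "a * E u = a * E u'" if "u \<approx> u'" for u u'
    using E_teq[OF that] by simp
  show "a * E (u @ v) = a * E u + a * E v" for u v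
    by (simp add: eps_id_def distrib_left)
qed

lemma E_mult_fst_right: "E (map (\<lambda>(p, q). (p * x, q)) w) = scale (\<epsilon> x) (E w)"
proof (rule lin_ext_surj_eq[OF bij1])
  show "E (map (\<lambda>(p, q). (p * x, q)) u) = E (map (\<lambda>(p, q). (p * x, q)) u')" if "u \<approx> u'" for u u'
    by (rule E_teq, rule teq_map_fst[OF linear_mult_right that])
  show "scale (\<epsilon> x) (E u) = scale (\<epsilon> x) (E u')" if "u \<approx> u'" for u u'
    using E_teq[OF that] by simp
  show "E (map (\<lambda>(p, q). (p * x, q)) (u @ v)) =
      E (map (\<lambda>(p, q). (p * x, q)) u) + E (map (\<lambda>(p, q). (p * x, q)) v)" for u v
    by (simp add: eps_id_def)
  show "scale (\<epsilon> x) (E (u @ v)) = scale (\<epsilon> x) (E u) + scale (\<epsilon> x) (E v)" for u v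
    by (simp add: eps_id_def scale_right_distrib)
  show "E (map (\<lambda>(p, q). (p * x, q)) (t1 a y)) = scale (\<epsilon> x) (E (t1 a y))" for a y
  proof -
    have "E (map (\<lambda>(p, q). (p * x, q)) (t1 a y)) = E (fst (\<Delta> a) [(x, y)])"
      by (rule E_teq, rule teq_sym, rule Delta_single)
    also have "\<dots> = a * scale (\<epsilon> x) y"
      unfolding E_Delta by (simp add: eps_id_def)
    finally show ?thesis
      using counit1 by (simp add: scale_mult_right)
  qed
qed

lemma eps_mult: "\<epsilon> (x * y) = \<epsilon> x * \<epsilon> y"
proof (cases "\<exists>s::'a. s \<noteq> 0")
  case True
  then obtain s :: 'a where "s \<noteq> 0" by blast
  have "scale (\<epsilon> (x * y)) s = scale (\<epsilon> x * \<epsilon> y) s"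
    using E_mult_fst_right[of y "[(x, s)]"] by (simp add: eps_id_def mult.commute)
  then show ?thesis
    using \<open>s \<noteq> 0\<close> by simp
next
  case False
  then have "x = 0" "x * y = 0" by auto
  then show ?thesis
    using lin_fun_zero[OF eps_lin] by simp
qed

lemma E_mult_fst_left: "E (map (\<lambda>(p, q). (x * p, q)) t) = scale (\<epsilon> x) (E t)"
  by (induct t) (auto simp: eps_id_def eps_mult scale_right_distrib)

lemma E_t2: "E (t2 x b) = scale (\<epsilon> x) b"
proof (rule mult_right_cancel)
  fix y
  have "E (t2 x b) * y = E (map (\<lambda>(p, q). (p, q * y)) (t2 x b))"
    by (simp add: eps_id_map_snd[OF linear_mult_right])
  also have "\<dots> = E (map (\<lambda>(p, q). (x * p, q)) (t1 b y))"
    by (rule E_teq[OF t2_mult_snd])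
  also have "\<dots> = scale (\<epsilon> x) b * y"
    using counit1 by (simp add: E_mult_fst_left scale_mult_left)
  finally show "E (t2 x b) * y = scale (\<epsilon> x) b * y" .
qed

lemma E_T1inv_map: "E (T1inv (map h L)) = sum_list (map (\<lambda>z. E (T1inv [h z])) L)"
proof (induct L)
  case Nil
  have "T1inv [] \<approx> []"
    by (rule T1inv_eqI) simp
  then have "E (T1inv []) = E []"
    by (rule E_teq)
  then show ?case
    by simp
next
  case (Cons z L)
  have "E (T1inv ([h z] @ map h L)) = E (T1inv [h z]) + E (T1inv (map h L))"
    using E_teq[OF T1inv_append] by (simp only: eps_id_append)
  then show ?case
    using Cons by simp
qed

lemma antipode_scale_left: "S (scale c y) q = scale c (S y q)"
proof -
  have "S (scale c y) q = E (T1inv (tscale scale c [(y, q)]))"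
    by (simp add: antipode_def tscale_def)
  also have "\<dots> = E (tscale scale c (T1inv [(y, q)]))"
    by (rule E_teq[OF T1inv_tscale])
  finally show ?thesis
    by (simp add: antipode_def eps_id_tscale[OF eps_lin])
qed

lemma antipode_E_left: "S (E t) q = sum_list (map (\<lambda>(x, y). scale (\<epsilon> x) (S y q)) t)"
proof -
  have "S (E t) q = E (T1inv (map (\<lambda>(x, y). (scale (\<epsilon> x) y, q)) t))"
    unfolding antipode_def by (rule E_teq, rule T1inv_teq, rule single_eps_id_fst[OF eps_lin])
  then show ?thesis
    by (simp add: E_T1inv_map split_def antipode_scale_left flip: antipode_def)
qed

lemma antipode_E_right: "S b (E t) = sum_list (map (\<lambda>(p, q). scale (\<epsilon> p) (S b q)) t)"
proof -
  have "S b (E t) = E (T1inv (map (\<lambda>(p, q). (scale (\<epsilon> p) b, q)) t))"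
    unfolding antipode_def by (rule E_teq, rule T1inv_teq, rule single_eps_id_snd[OF eps_lin])
  then show ?thesis
    by (simp add: E_T1inv_map split_def antipode_scale_left flip: antipode_def)
qed

lemma T1_map_fst_left: "T1 (map (\<lambda>(p, q). (x * p, q)) u) \<approx> fst (\<Delta> x) (T1 u)"
proof (induct u)
  case Nil
  then show ?case
    by (simp add: teq_sym[OF Delta_Nil])
next
  case (Cons z u)
  obtain a b where z: "z = (a, b)" by force
  have "t1 (x * a) b @ T1 (map (\<lambda>(p, q). (x * p, q)) u) \<approx> fst (\<Delta> x) (t1 a b) @ fst (\<Delta> x) (T1 u)"
    by (rule teq_append[OF teq_sym[OF Delta_t1] Cons])
  also have "\<dots> \<approx> fst (\<Delta> x) (t1 a b @ T1 u)"
    by (rule teq_sym, rule Delta_append)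
  finally show ?case
    by (simp add: z)
qed

lemma T1inv_mult:
  "T1inv [(a * b, c)] \<approx>
    concat (map (\<lambda>(p, q). map (\<lambda>(r, s). (p * r, s)) (T1inv [(b, q)])) (T1inv [(a, c)]))"
  (is "_ \<approx> concat (map ?block (T1inv [(a, c)]))")
proof (rule T1inv_eqI)
  have "T1 (?block (p, q)) \<approx> map (\<lambda>(r, s). (r * b, s)) (t1 p q)" for p q
  proof -
    have "T1 (?block (p, q)) \<approx> fst (\<Delta> p) (T1 (T1inv [(b, q)]))"
      by (simp add: T1_map_fst_left)
    also have "\<dots> \<approx> fst (\<Delta> p) [(b, q)]"
      by (rule Delta_teq, rule T1_T1inv)
    finally show ?thesis
      using Delta_single by (rule teq_trans)
  qed
  then have "T1 (concat (map ?block (T1inv [(a, c)])))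
      \<approx> concat (map (\<lambda>(p, q). map (\<lambda>(r, s). (r * b, s)) (t1 p q)) (T1inv [(a, c)]))"
    unfolding lin_ext_concat map_map by (auto intro!: teq_concat_map)
  also have "\<dots> = map (\<lambda>(r, s). (r * b, s)) (T1 (T1inv [(a, c)]))"
    by (simp add: lin_ext_def map_concat comp_def split_def)
  also have "\<dots> \<approx> map (\<lambda>(r, s). (r * b, s)) [(a, c)]"
    by (rule teq_map_fst[OF linear_mult_right T1_T1inv])
  finally show "T1 (concat (map ?block (T1inv [(a, c)]))) \<approx> [(a * b, c)]"
    by simp
qed

lemma E_id_eps_id_id_ten:
  "E (id_eps_id scale \<epsilon> (id_ten T1inv (map (\<lambda>(x, y). (x, y, q)) t))) =
    sum_list (map (\<lambda>(x, y). scale (\<epsilon> x) (S y q)) t)"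
proof (induct t)
  case (Cons z t)
  obtain x y where z: "z = (x, y)" by force
  have "E (id_eps_id scale \<epsilon> (map (\<lambda>(p, q). (x, p, q)) u)) = scale (\<epsilon> x) (E u)" for u
    by (induct u)
      (auto simp: id_eps_id_def eps_id_def lin_fun_scale[OF eps_lin] scale_right_distrib mult.commute)
  then show ?case
    using Cons by (simp add: z id_ten_def id_eps_id_def antipode_def)
qed (simp add: id_ten_def id_eps_id_def)

lemma E_T1inv_mult_fst_left: "E (map (\<lambda>(r, s). (p * r, s)) (T1inv [(b, q)])) = scale (\<epsilon> p) (S b q)"
proof -
  have "E (map (\<lambda>(r, s). (p * r, s)) (T1inv [(b, q)])) =
      E (id_eps_id scale \<epsilon> (id_ten T1inv (map (\<lambda>(x, y). (x, y, q)) (t2 p b))))"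
    using lcol unfolding left_colinear_def by (intro E_teq) blast
  also have "\<dots> = S (E (t2 p b)) q"
    by (simp add: E_id_eps_id_id_ten antipode_E_left)
  finally show ?thesis
    by (simp add: E_t2 antipode_scale_left)
qed

lemma antipode_mult: "S (a * b) c = S b (S a c)"
proof -
  have "S (a * b) c =
      E (concat (map (\<lambda>(p, q). map (\<lambda>(r, s). (p * r, s)) (T1inv [(b, q)])) (T1inv [(a, c)])))"
    unfolding antipode_def by (rule E_teq, rule T1inv_mult)
  also have "\<dots> = sum_list (map (\<lambda>(p, q). scale (\<epsilon> p) (S b q)) (T1inv [(a, c)]))"
    by (simp add: eps_id_concat comp_def case_prod_beta E_T1inv_mult_fst_left) (simp add: split_def)
  also have "\<dots> = S b (S a c)"
    unfolding antipode_def[of scale \<epsilon> t1 a c] by (rule antipode_E_right[symmetric])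
  finally show ?thesis .
qed

end

theorem lemma3p2:
  fixes scale :: "'k::field \<Rightarrow> 'a::ring \<Rightarrow> 'a"
    and \<Delta> :: "'a \<Rightarrow> 'a mult"
    and \<epsilon> :: "'a \<Rightarrow> 'k"
    and t1 t2 :: "'a \<Rightarrow> 'a \<Rightarrow> 'a ten"
  assumes alg: "k_algebra scale"
    and nondeg: "nondegenerate TYPE('a)"
    and hom: "alg_hom_mult scale \<Delta>"
    and galois: "galois_maps scale \<Delta> t1 t2"
    and eps_lin: "lin_fun scale \<epsilon>"
    and counit1: "\<forall>a b. eps_id scale \<epsilon> (t1 a b) = a * b"
    and counit2: "\<forall>a b. id_eps scale \<epsilon> (t2 a b) = a * b"
    and bij1: "tbij scale (lin_ext t1)"
    and bij2: "tbij scale (lin_ext t2)"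
    and lcol: "left_colinear scale \<epsilon> t1 t2"
    and rcol: "right_colinear scale \<epsilon> t1 t2"
  shows "\<forall>a b c. antipode scale \<epsilon> t1 (a * b) c = antipode scale \<epsilon> t1 b (antipode scale \<epsilon> t1 a c)"
proof -
  interpret left_hopf_coquasigroup scale \<Delta> \<epsilon> t1 t2
    by unfold_locales (fact alg nondeg hom galois eps_lin counit1 bij1 lcol)+
  show ?thesis
    using antipode_mult by blast
qed

end
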